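(* For every type $\tau$ there is a unique construction scheme over $\omega$ of type $\tau$.
   Context: A type is a sequence $\tau=\{(m_k,n_{k+1},r_{k+1})\}_{k\in\omega}$ of natural numbers with $m_0=1$; $n_k\ge2$ for $k\ge1$; every $r\in\omega$ equals $r_k$ for infinitely many $k$; $m_k>r_{k+1}$; and $m_{k+1}=r_{k+1}+(m_k-r_{k+1})n_{k+1}$ for all $k$. For a set of ordinals $X$ and $\mathcal F\subseteq[X]^{<\omega}$, $\mathcal F_k$ is the set of elements of rank $k$ in the well-founded order $(\mathcal F,\subsetneq)$; $A\sqsubseteq B$ means $A\subseteq B$ and every element of $B$ below an element of $A$ is in $A$; $A<B$ means every element of $A$ is below every element of $B$. $\mathcal F$ is a construction scheme over $X$ of type $\tau$ if (1) every finite subset of $X$ lies in a member of $\mathcal F$; (2) $|F|=m_k$ for $F\in\mathcal F_k$; (3) $E\cap F\sqsubseteq E$ and $E\cap F\sqsubseteq F$ for $E,F\in\mathcal F_k$; (4) each $F\in\mathcal F_{k+1}$ is the union of uniquely determined $F_0,\dots,F_{n_{k+1}-1}\in\mathcal F_k$ forming a $\Delta$-system with root $R(F)$, $|R(F)|=r_{k+1}$, and $R(F)<F_0\setminus R(F)<\dots<F_{n_{k+1}-1}\setminus R(F)$. *)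

theory Defs
  imports Main
begin

text \<open>A type tau is a sequence of triples indexed by k; tau k = (m_k, n_{k+1}, r_{k+1}).\<close>

definition ty_m :: "(nat \<Rightarrow> nat \<times> nat \<times> nat) \<Rightarrow> nat \<Rightarrow> nat" where
  "ty_m \<tau> k = fst (\<tau> k)"

definition ty_n :: "(nat \<Rightarrow> nat \<times> nat \<times> nat) \<Rightarrow> nat \<Rightarrow> nat" where
  "ty_n \<tau> k = fst (snd (\<tau> k))"

definition ty_r :: "(nat \<Rightarrow> nat \<times> nat \<times> nat) \<Rightarrow> nat \<Rightarrow> nat" where
  "ty_r \<tau> k = snd (snd (\<tau> k))"

definition is_type :: "(nat \<Rightarrow> nat \<times> nat \<times> nat) \<Rightarrow> bool" where
  "is_type \<tau> \<longleftrightarrow>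
     ty_m \<tau> 0 = 1 \<and>
     (\<forall>k. ty_n \<tau> k \<ge> 2) \<and>
     (\<forall>x. infinite {k. ty_r \<tau> k = x}) \<and>
     (\<forall>k. ty_m \<tau> k > ty_r \<tau> k) \<and>
     (\<forall>k. ty_m \<tau> (Suc k) = ty_r \<tau> k + (ty_m \<tau> k - ty_r \<tau> k) * ty_n \<tau> k)"

definition fam_rank :: "nat set set \<Rightarrow> nat set \<Rightarrow> nat" where
  "fam_rank \<F> A = (GREATEST j. \<exists>c :: nat \<Rightarrow> nat set. c j = A \<and> (\<forall>i\<le>j. c i \<in> \<F>) \<and>
                                   (\<forall>i<j. c i \<subset> c (Suc i)))"

definition level :: "nat set set \<Rightarrow> nat \<Rightarrow> nat set set" where
  "level \<F> k = {A \<in> \<F>. fam_rank \<F> A = k}"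

definition init_seg :: "nat set \<Rightarrow> nat set \<Rightarrow> bool" where
  "init_seg A B \<longleftrightarrow> A \<subseteq> B \<and> (\<forall>b\<in>B. \<forall>a\<in>A. b < a \<longrightarrow> b \<in> A)"

definition set_less :: "nat set \<Rightarrow> nat set \<Rightarrow> bool" where
  "set_less A B \<longleftrightarrow> (\<forall>a\<in>A. \<forall>b\<in>B. a < b)"

definition decomposes :: "nat set set \<Rightarrow> nat \<Rightarrow> nat \<Rightarrow> nat \<Rightarrow> nat set \<Rightarrow> nat set list \<Rightarrow> bool" where
  "decomposes \<F> k n r F Gs \<longleftrightarrow>
     length Gs = n \<and> set Gs \<subseteq> level \<F> k \<and> F = \<Union> (set Gs) \<and>
     (\<exists>R. (\<forall>i<n. \<forall>j<n. i \<noteq> j \<longrightarrow> Gs ! i \<inter> Gs ! j = R) \<and> card R = r \<and>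
          set_less R (Gs ! 0 - R) \<and>
          (\<forall>i. Suc i < n \<longrightarrow> set_less (Gs ! i - R) (Gs ! Suc i - R)))"

definition construction_scheme :: "(nat \<Rightarrow> nat \<times> nat \<times> nat) \<Rightarrow> nat set set \<Rightarrow> bool" where
  "construction_scheme \<tau> \<F> \<longleftrightarrow>
     (\<forall>A\<in>\<F>. finite A) \<and>
     (\<forall>A. finite A \<longrightarrow> (\<exists>F\<in>\<F>. A \<subseteq> F)) \<and>
     (\<forall>k. \<forall>F\<in>level \<F> k. card F = ty_m \<tau> k) \<and>
     (\<forall>k. \<forall>E\<in>level \<F> k. \<forall>F\<in>level \<F> k. init_seg (E \<inter> F) E \<and> init_seg (E \<inter> F) F) \<and>
     (\<forall>k. \<forall>F\<in>level \<F> (Suc k). \<exists>!Gs. decomposes \<F> k (ty_n \<tau> k) (ty_r \<tau> k) F Gs)"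

end

theory Submission
  imports Defs
begin

text \<open>
  Write m_k, n_k, r_k for the parameters of \<tau>. The interval {..<m_(k+1)} is the union of
  n_k copies of {..<m_k}: the a-th copy is the image of the map fixing the root {..<r_k}
  and shifting the other points by a(m_k - r_k), and these copies form a \<Delta>-system as in (4).
  The images of {..<m_k} under all composites of such maps form a construction scheme whose
  members of rank k are exactly these images.

  Conversely, a \<Delta>-system decomposition of a finite set S as in (4) is unique, since
  R \<union> F_0 \<union> ... \<union> F_(j-1) must be the initial segment of S of size r + j(m - r).
  In an arbitrary scheme every {..<m_k} has rank k, being an initial segment of a larger
  member, and by downward induction on the rank the decomposition of a canonical set is
  the canonical one, so all canonical sets belong to the scheme. Finally a member E of
  rank k lies in some {..<m_N}; coherence with the block containing max E puts E inside
  that block, and descending level by level E turns out to be canonical.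
\<close>

lemma is_typeD:
  assumes "is_type \<tau>"
  shows "ty_m \<tau> 0 = 1" "2 \<le> ty_n \<tau> k" "ty_r \<tau> k < ty_m \<tau> k"
    "ty_m \<tau> (Suc k) = ty_r \<tau> k + (ty_m \<tau> k - ty_r \<tau> k) * ty_n \<tau> k"
  using assms unfolding is_type_def by auto

lemma strict_mono_ty_m:
  assumes "is_type \<tau>"
  shows "strict_mono (ty_m \<tau>)"
  unfolding strict_mono_Suc_iff
proof
  fix k
  have "(ty_m \<tau> k - ty_r \<tau> k) * 2 \<le> (ty_m \<tau> k - ty_r \<tau> k) * ty_n \<tau> k"
    using is_typeD(2)[OF assms, of k] by simp
  then show "ty_m \<tau> k < ty_m \<tau> (Suc k)"
    using is_typeD(3,4)[OF assms, of k] by linarith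
qed

lemma ty_m_le_iff: "is_type \<tau> \<Longrightarrow> ty_m \<tau> i \<le> ty_m \<tau> j \<longleftrightarrow> i \<le> j"
  by (simp add: strict_mono_less_eq strict_mono_ty_m)

lemma ty_m_less_iff: "is_type \<tau> \<Longrightarrow> ty_m \<tau> i < ty_m \<tau> j \<longleftrightarrow> i < j"
  by (simp add: strict_mono_less strict_mono_ty_m)

lemma ty_m_eq_iff: "is_type \<tau> \<Longrightarrow> ty_m \<tau> i = ty_m \<tau> j \<longleftrightarrow> i = j"
  by (simp add: strict_mono_eq strict_mono_ty_m)

lemma ty_m_pos: "is_type \<tau> \<Longrightarrow> 0 < ty_m \<tau> k"
  using ty_m_le_iff[of \<tau> 0 k] is_typeD(1)[of \<tau>] by simp

lemma ty_n_pos: "is_type \<tau> \<Longrightarrow> 0 < ty_n \<tau> k"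
  using is_typeD(2)[of \<tau> k] by simp

lemma finite_subset_lessThan_ty_m:
  assumes "is_type \<tau>" "finite A"
  obtains N where "A \<subseteq> {..<ty_m \<tau> N}"
proof -
  obtain N where N: "A \<subseteq> {..<N}" using assms(2) finite_nat_set_iff_bounded by auto
  have "N \<le> ty_m \<tau> N" by (rule strict_mono_imp_increasing[OF strict_mono_ty_m[OF assms(1)]])
  then have "A \<subseteq> {..<ty_m \<tau> N}" by (intro subset_trans[OF N]) simp
  then show ?thesis by (rule that)
qed

lemma init_seg_refl: "init_seg A A"
  unfolding init_seg_def by auto

lemma init_seg_Int_Union:
  assumes "\<And>G. G \<in> \<G> \<Longrightarrow> init_seg (E \<inter> G) E"
  shows "init_seg (E \<inter> \<Union>\<G>) E"
  unfolding init_seg_def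
proof (intro conjI ballI impI)
  fix b a assume "b \<in> E" "a \<in> E \<inter> \<Union>\<G>" "b < a"
  then obtain G where "G \<in> \<G>" "a \<in> E \<inter> G" by auto
  with assms[OF \<open>G \<in> \<G>\<close>] \<open>b \<in> E\<close> \<open>b < a\<close> have "b \<in> E \<inter> G" unfolding init_seg_def by auto
  with \<open>G \<in> \<G>\<close> show "b \<in> E \<inter> \<Union>\<G>" by auto
qed auto

lemma init_seg_trans: "init_seg A B \<Longrightarrow> init_seg B C \<Longrightarrow> init_seg A C"
  unfolding init_seg_def by blast

lemma init_seg_lessThan: "{..<n} \<subseteq> S \<Longrightarrow> init_seg {..<n} S"
  unfolding init_seg_def by auto

lemma init_seg_card_eq:
  assumes "init_seg A S" "init_seg B S" "finite S" "card A = card B"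
  shows "A = B"
proof -
  have "X \<subseteq> Y" if X: "init_seg X S" and Y: "init_seg Y S" and "card X = card Y" for X Y
  proof
    fix a assume a: "a \<in> X"
    have "finite X" "finite Y" using X Y \<open>finite S\<close> unfolding init_seg_def by (auto intro: finite_subset)
    show "a \<in> Y"
    proof (rule ccontr)
      assume "a \<notin> Y"
      have "Y \<subseteq> X - {a}"
      proof
        fix b assume "b \<in> Y"
        have "\<not> a < b" using Y X a \<open>a \<notin> Y\<close> \<open>b \<in> Y\<close> unfolding init_seg_def by blast
        then have "b < a" using \<open>a \<notin> Y\<close> \<open>b \<in> Y\<close> by (cases "a = b") auto
        then show "b \<in> X - {a}" using X Y a \<open>b \<in> Y\<close> unfolding init_seg_def by blast
      qed
      then have "card Y \<le> card (X - {a})" using \<open>finite X\<close> by (simp add: card_mono)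
      also have "\<dots> < card X" using \<open>finite X\<close> a by (rule card_Diff1_less)
      finally show False using \<open>card X = card Y\<close> by simp
    qed
  qed
  then show ?thesis using assms by (simp add: subset_antisym)
qed

lemma init_seg_Int_subset:
  assumes "init_seg (E \<inter> G) E" "finite E" "E \<noteq> {}" "Max E \<in> G"
  shows "E \<subseteq> G"
proof
  fix e assume "e \<in> E"
  then have "e = Max E \<or> e < Max E" using Max_ge[OF assms(2)] le_less by blast
  then show "e \<in> G"
    using assms(1,4) Max_in[OF assms(2,3)] \<open>e \<in> E\<close> unfolding init_seg_def by blast
qed

lemma set_less_trans: "set_less A B \<Longrightarrow> set_less B C \<Longrightarrow> B \<noteq> {} \<Longrightarrow> set_less A C"
  unfolding set_less_def by (meson ex_in_conv less_trans)

lemma set_less_image: "strict_mono g \<Longrightarrow> set_less A B \<Longrightarrow> set_less (g ` A) (g ` B)"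
  unfolding set_less_def by (auto simp: strict_mono_less)

lemma set_less_chain:
  assumes "\<And>i. Suc i < n \<Longrightarrow> set_less (A i) (A (Suc i))" "\<And>i. i < n \<Longrightarrow> A i \<noteq> {}"
    and "i < j" "j < n"
  shows "set_less (A i) (A j)"
  using assms(3,4)
proof (induction j)
  case 0
  then show ?case by simp
next
  case (Suc j)
  have step: "set_less (A j) (A (Suc j))" using assms(1) Suc.prems(2) .
  show ?case
  proof (cases "i = j")
    case False
    then have "set_less (A i) (A j)" using Suc by simp
    moreover note step
    moreover have "A j \<noteq> {}" using assms(2) Suc.prems(2) by simp
    ultimately show ?thesis by (rule set_less_trans)
  next
    case True
    from step show ?thesis unfolding True .
  qed
qed

section \<open>The blocks of an interval\<close>

definition block_emb :: "(nat \<Rightarrow> nat \<times> nat \<times> nat) \<Rightarrow> nat \<Rightarrow> nat \<Rightarrow> nat \<Rightarrow> nat" where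
  "block_emb \<tau> k a x = (if x < ty_r \<tau> k then x else x + a * (ty_m \<tau> k - ty_r \<tau> k))"

lemma strict_mono_block_emb: "strict_mono (block_emb \<tau> k a)"
  unfolding strict_mono_def block_emb_def by auto

lemma block_emb_0: "block_emb \<tau> k 0 = id"
  unfolding block_emb_def by auto

lemma le_block_emb: "x \<le> block_emb \<tau> k a x"
  unfolding block_emb_def by auto

lemma block_emb_root: "x < ty_r \<tau> k \<Longrightarrow> block_emb \<tau> k a x = x"
  unfolding block_emb_def by simp

lemma block_emb_image:
  fixes k a :: nat
  assumes "is_type \<tau>"
  defines "d \<equiv> ty_m \<tau> k - ty_r \<tau> k"
  shows "block_emb \<tau> k a ` {..<ty_m \<tau> k} = {..<ty_r \<tau> k} \<union> {ty_r \<tau> k + a * d ..< ty_r \<tau> k + a * d + d}"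
    (is "?L = ?R")
proof
  show "?L \<subseteq> ?R" using is_typeD(3)[OF assms(1), of k] by (auto simp: block_emb_def d_def)
next
  show "?R \<subseteq> ?L"
  proof
    fix x assume x: "x \<in> ?R"
    show "x \<in> ?L"
    proof (cases "x < ty_r \<tau> k")
      case True
      then show ?thesis using is_typeD(3)[OF assms(1), of k]
        by (auto simp: block_emb_root intro!: image_eqI[of _ _ x])
    next
      case False
      with x have "x - a * d \<in> {ty_r \<tau> k..<ty_m \<tau> k}" "x = (x - a * d) + a * d"
        by (auto simp: d_def)
      then show ?thesis by (auto simp: block_emb_def d_def intro!: image_eqI[of _ _ "x - a * d"])
    qed
  qed
qed

lemma block_emb_image_Int:
  assumes "is_type \<tau>" "a \<noteq> b"
  shows "block_emb \<tau> k a ` {..<ty_m \<tau> k} \<inter> block_emb \<tau> k b ` {..<ty_m \<tau> k} = {..<ty_r \<tau> k}"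
proof -
  let ?r = "ty_r \<tau> k" and ?d = "ty_m \<tau> k - ty_r \<tau> k"
  have "{?r + a * ?d ..< ?r + a * ?d + ?d} \<inter> {?r + b * ?d ..< ?r + b * ?d + ?d} = {}"
    if "a < b" for a b :: nat
  proof -
    from that have "a * ?d + ?d \<le> b * ?d" using mult_le_mono1[of "Suc a" b ?d] by simp
    then show ?thesis by auto
  qed
  with assms(2) have "{?r + a * ?d ..< ?r + a * ?d + ?d} \<inter> {?r + b * ?d ..< ?r + b * ?d + ?d} = {}"
    by (metis Int_commute linorder_neqE_nat)
  then show ?thesis unfolding block_emb_image[OF assms(1)] by auto
qed

lemma UN_block_emb_image:
  assumes "is_type \<tau>"
  shows "(\<Union>a<ty_n \<tau> k. block_emb \<tau> k a ` {..<ty_m \<tau> k}) = {..<ty_m \<tau> (Suc k)}"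
proof -
  let ?r = "ty_r \<tau> k" and ?d = "ty_m \<tau> k - ty_r \<tau> k" and ?n = "ty_n \<tau> k"
  have d: "0 < ?d" and n: "0 < ?n" using is_typeD(2,3)[OF assms, of k] by auto
  have m: "ty_m \<tau> (Suc k) = ?r + ?d * ?n" using is_typeD(4)[OF assms] by simp
  have "{?r..<?r + ?d * ?n} = (\<Union>a<?n. {?r + a * ?d ..< ?r + a * ?d + ?d})"
  proof (intro equalityI subsetI)
    fix x assume x: "x \<in> {?r..<?r + ?d * ?n}"
    define a where "a = (x - ?r) div ?d"
    have "a < ?n" using x d by (auto simp: a_def div_less_iff_less_mult mult.commute)
    moreover have "a * ?d \<le> x - ?r" "x - ?r < a * ?d + ?d"
      unfolding a_def using div_mult_mod_eq[of "x - ?r" ?d] mod_less_divisor[OF d, of "x - ?r"]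
      by linarith+
    ultimately show "x \<in> (\<Union>a<?n. {?r + a * ?d ..< ?r + a * ?d + ?d})" using x by force
  next
    fix x assume "x \<in> (\<Union>a<?n. {?r + a * ?d ..< ?r + a * ?d + ?d})"
    then obtain a where "a < ?n" "x \<in> {?r + a * ?d ..< ?r + a * ?d + ?d}" by blast
    moreover have "a * ?d + ?d \<le> ?d * ?n" using \<open>a < ?n\<close> mult_le_mono1[of "Suc a" ?n ?d]
      by (simp add: mult.commute)
    ultimately show "x \<in> {?r..<?r + ?d * ?n}" by auto
  qed
  then show ?thesis unfolding block_emb_image[OF assms] m using n by auto
qed

fun emb :: "(nat \<Rightarrow> nat \<times> nat \<times> nat) \<Rightarrow> nat \<Rightarrow> nat \<Rightarrow> (nat \<Rightarrow> nat) \<Rightarrow> nat \<Rightarrow> nat" where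
  "emb \<tau> k 0 f = id"
| "emb \<tau> k (Suc K) f = (if K < k then id else block_emb \<tau> K (f K) \<circ> emb \<tau> k K f)"

definition admissible :: "(nat \<Rightarrow> nat \<times> nat \<times> nat) \<Rightarrow> (nat \<Rightarrow> nat) \<Rightarrow> nat \<Rightarrow> nat \<Rightarrow> bool" where
  "admissible \<tau> f k K \<longleftrightarrow> (\<forall>j. k \<le> j \<longrightarrow> j < K \<longrightarrow> f j < ty_n \<tau> j)"

lemma admissible_update:
  "admissible \<tau> f (Suc k) K \<Longrightarrow> a < ty_n \<tau> k \<Longrightarrow> admissible \<tau> (f(k := a)) k K"
  unfolding admissible_def by (metis Suc_leI fun_upd_other fun_upd_same le_neq_implies_less)

lemma admissible_Suc: "admissible \<tau> f k K \<Longrightarrow> admissible \<tau> f (Suc k) K"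
  unfolding admissible_def by simp

lemma admissible_lower: "admissible \<tau> f k (Suc K) \<Longrightarrow> admissible \<tau> f k K"
  unfolding admissible_def by simp

lemma emb_trivial: "K \<le> k \<Longrightarrow> emb \<tau> k K f = id"
  by (cases K) auto

lemma strict_mono_emb: "strict_mono (emb \<tau> k K f)"
  by (induction K) (auto simp: strict_mono_def strict_mono_less[OF strict_mono_block_emb])

lemma inj_emb: "inj (emb \<tau> k K f)"
  using strict_mono_emb strict_mono_imp_inj_on by blast

lemma card_emb_image: "card (emb \<tau> k K f ` {..<ty_m \<tau> k}) = ty_m \<tau> k"
  by (metis card_image card_lessThan inj_emb inj_on_subset subset_UNIV)

lemma emb_trans: "i \<le> k \<Longrightarrow> k \<le> K \<Longrightarrow> emb \<tau> i K f = emb \<tau> k K f \<circ> emb \<tau> i k f"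
  by (induction K) (auto simp: emb_trivial le_Suc_eq)

lemma emb_cong: "(\<And>j. k \<le> j \<Longrightarrow> j < K \<Longrightarrow> f j = g j) \<Longrightarrow> emb \<tau> k K f = emb \<tau> k K g"
  by (induction K) auto

lemma emb_eq_id: "(\<And>j. k \<le> j \<Longrightarrow> j < K \<Longrightarrow> f j = 0) \<Longrightarrow> emb \<tau> k K f = id"
  by (induction K) (auto simp: block_emb_0)

lemma emb_update_bottom: "k < K \<Longrightarrow> emb \<tau> k K (f(k := a)) = emb \<tau> (Suc k) K f \<circ> block_emb \<tau> k a"
proof -
  assume "k < K"
  then have "emb \<tau> k K (f(k := a)) = emb \<tau> (Suc k) K (f(k := a)) \<circ> emb \<tau> k (Suc k) (f(k := a))"
    by (intro emb_trans) auto
  also have "emb \<tau> (Suc k) K (f(k := a)) = emb \<tau> (Suc k) K f" by (rule emb_cong) auto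
  also have "emb \<tau> k (Suc k) (f(k := a)) = block_emb \<tau> k a" by (simp add: emb_trivial)
  finally show ?thesis .
qed

lemma emb_image_subset:
  assumes "is_type \<tau>" "admissible \<tau> f k K" "k \<le> K"
  shows "emb \<tau> k K f ` {..<ty_m \<tau> k} \<subseteq> {..<ty_m \<tau> K}"
  using assms(2,3)
proof (induction K)
  case (Suc K)
  show ?case
  proof (cases "k = Suc K")
    case False
    then have "k \<le> K" "f K < ty_n \<tau> K" "admissible \<tau> f k K"
      using Suc.prems unfolding admissible_def by auto
    then have "emb \<tau> k (Suc K) f ` {..<ty_m \<tau> k} \<subseteq> block_emb \<tau> K (f K) ` {..<ty_m \<tau> K}"
      using Suc.IH by (auto simp: image_comp[symmetric])
    also have "\<dots> \<subseteq> {..<ty_m \<tau> (Suc K)}"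
      using UN_block_emb_image[OF assms(1), of K] \<open>f K < ty_n \<tau> K\<close> by blast
    finally show ?thesis .
  qed (simp add: emb_trivial)
qed simp

section \<open>Delta-system decompositions\<close>

lemma init_seg_prefix_blocks:
  fixes G :: "nat \<Rightarrow> nat set" and n j :: nat
  assumes "\<And>i. i < n \<Longrightarrow> set_less R (G i - R)"
    and "\<And>i l. i < l \<Longrightarrow> l < n \<Longrightarrow> set_less (G i - R) (G l - R)"
    and "j \<le> n"
  shows "init_seg (R \<union> (\<Union>i<j. G i)) (R \<union> (\<Union>i<n. G i))"
  unfolding init_seg_def
proof (intro conjI ballI impI)
  show "R \<union> (\<Union>i<j. G i) \<subseteq> R \<union> (\<Union>i<n. G i)" using \<open>j \<le> n\<close> by auto
next
  fix x y assume x: "x \<in> R \<union> (\<Union>i<n. G i)" and y: "y \<in> R \<union> (\<Union>i<j. G i)" and "x < y"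
  show "x \<in> R \<union> (\<Union>i<j. G i)"
  proof (rule ccontr)
    assume x_notin: "x \<notin> R \<union> (\<Union>i<j. G i)"
    obtain l where l: "l < n" "x \<in> G l - R" using x x_notin by auto
    have "j \<le> l"
    proof (rule ccontr)
      assume "\<not> j \<le> l"
      then have "l \<in> {..<j}" by simp
      with l(2) x_notin show False by auto
    qed
    have "y < x"
    proof (cases "y \<in> R")
      case True
      then show ?thesis using assms(1)[OF l(1)] l(2) unfolding set_less_def by blast
    next
      case False
      then obtain i where "i < j" "y \<in> G i - R" using y by auto
      moreover from \<open>i < j\<close> \<open>j \<le> l\<close> have "i < l" by simp
      ultimately show ?thesis using assms(2)[of i l] l unfolding set_less_def by blast
    qed
    with \<open>x < y\<close> show False by simp
  qed
qed

text \<open>Condition (4) for a list of sets of size m, without reference to a family.\<close>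

definition delta_decomp :: "nat \<Rightarrow> nat \<Rightarrow> nat \<Rightarrow> nat set \<Rightarrow> nat set list \<Rightarrow> bool" where
  "delta_decomp n r m S Gs \<longleftrightarrow>
     length Gs = n \<and> (\<forall>G\<in>set Gs. finite G \<and> card G = m) \<and> S = \<Union>(set Gs) \<and>
     (\<exists>R. (\<forall>i<n. \<forall>j<n. i \<noteq> j \<longrightarrow> Gs ! i \<inter> Gs ! j = R) \<and> card R = r \<and>
          set_less R (Gs ! 0 - R) \<and>
          (\<forall>i. Suc i < n \<longrightarrow> set_less (Gs ! i - R) (Gs ! Suc i - R)))"

lemma decomposes_imp_delta_decomp:
  assumes "decomposes F k n r S Gs" "\<And>G. G \<in> level F k \<Longrightarrow> finite G \<and> card G = m"
  shows "delta_decomp n r m S Gs"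
  using assms unfolding decomposes_def delta_decomp_def by blast

lemma delta_decomp_imp_decomposes:
  "delta_decomp n r m S Gs \<Longrightarrow> set Gs \<subseteq> level F k \<Longrightarrow> decomposes F k n r S Gs"
  unfolding decomposes_def delta_decomp_def by blast

lemma delta_decomp_root:
  assumes "delta_decomp n r m S Gs" "2 \<le> n" "r < m"
  obtains R where "finite R" "card R = r" "\<And>i. i < n \<Longrightarrow> R \<subseteq> Gs ! i"
    "\<And>i j. i < n \<Longrightarrow> j < n \<Longrightarrow> i \<noteq> j \<Longrightarrow> Gs ! i \<inter> Gs ! j = R"
    "\<And>i. i < n \<Longrightarrow> set_less R (Gs ! i - R)"
    "\<And>i j. i < j \<Longrightarrow> j < n \<Longrightarrow> set_less (Gs ! i - R) (Gs ! j - R)"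
proof -
  obtain R where R: "\<forall>i<n. \<forall>j<n. i \<noteq> j \<longrightarrow> Gs ! i \<inter> Gs ! j = R" "card R = r"
    "set_less R (Gs ! 0 - R)" "\<forall>i. Suc i < n \<longrightarrow> set_less (Gs ! i - R) (Gs ! Suc i - R)"
    using assms(1) unfolding delta_decomp_def by blast
  have G: "finite (Gs ! i) \<and> card (Gs ! i) = m" if "i < n" for i
    using assms(1) that unfolding delta_decomp_def by (metis nth_mem)
  have sub: "R \<subseteq> Gs ! i" if "i < n" for i
    using R(1) that assms(2) by (metis Int_lower1 One_nat_def less_2_cases_iff order_less_le_trans zero_neq_one)
  have "finite R" using sub[of 0] G[of 0] assms(2) finite_subset by auto
  have ne: "Gs ! i - R \<noteq> {}" if "i < n" for i
  proof -
    have "card (Gs ! i - R) = m - r" using G[OF that] sub[OF that] \<open>finite R\<close> R(2)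
      by (simp add: card_Diff_subset)
    then show ?thesis using assms(3) by (intro notI) simp
  qed
  have chain: "set_less (Gs ! i - R) (Gs ! j - R)" if "i < j" "j < n" for i j
    by (rule set_less_chain[of n "\<lambda>i. Gs ! i - R"]) (use R(4) ne that in auto)
  have root_less: "set_less R (Gs ! i - R)" if "i < n" for i
  proof (cases "i = 0")
    case False
    with that have "set_less (Gs ! 0 - R) (Gs ! i - R)" "Gs ! 0 - R \<noteq> {}"
      using chain ne by auto
    with R(3) show ?thesis by (blast intro: set_less_trans)
  qed (use R(3) in simp)
  have Int_eq: "Gs ! i \<inter> Gs ! j = R" if "i < n" "j < n" "i \<noteq> j" for i j
    using R(1) that by blast
  show ?thesis by (rule that[OF \<open>finite R\<close> R(2) sub Int_eq root_less chain])
qed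

lemma delta_decomp_prefixes:
  assumes "delta_decomp n r m S Gs" "2 \<le> n" "r < m"
  obtains P where "finite S" "\<And>j. j \<le> n \<Longrightarrow> init_seg (P j) S"
    "\<And>j. j \<le> n \<Longrightarrow> card (P j) = r + j * (m - r)"
    "\<And>j. j < n \<Longrightarrow> Gs ! j = P 0 \<union> (P (Suc j) - P j)" "P 1 = Gs ! 0"
proof -
  obtain R where R: "finite R" "card R = r" "\<And>i. i < n \<Longrightarrow> R \<subseteq> Gs ! i"
    "\<And>i j. i < n \<Longrightarrow> j < n \<Longrightarrow> i \<noteq> j \<Longrightarrow> Gs ! i \<inter> Gs ! j = R"
    "\<And>i. i < n \<Longrightarrow> set_less R (Gs ! i - R)"
    "\<And>i j. i < j \<Longrightarrow> j < n \<Longrightarrow> set_less (Gs ! i - R) (Gs ! j - R)"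
    using delta_decomp_root[OF assms] by blast
  have len: "length Gs = n" and G: "\<forall>G\<in>set Gs. finite G \<and> card G = m" and "S = \<Union>(set Gs)"
    using assms(1) unfolding delta_decomp_def by blast+
  then have "S = (\<Union>i<n. Gs ! i)" by (auto simp: set_conv_nth)
  then have S: "S = R \<union> (\<Union>i<n. Gs ! i)" using R(3)[of 0] assms(2) by (auto intro!: bexI[of _ 0])
  define P where "P j = R \<union> (\<Union>i<j. Gs ! i)" for j
  have P_Suc: "P (Suc j) = P j \<union> (Gs ! j - R)" for j
    unfolding P_def lessThan_Suc by blast
  have disjoint: "P j \<inter> (Gs ! j - R) = {}" if "j < n" for j
  proof -
    have "Gs ! i \<inter> Gs ! j = R" if "i < j" for i using R(4)[of i j] that \<open>j < n\<close> by simp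
    then show ?thesis unfolding P_def by blast
  qed
  have card_G: "card (Gs ! j - R) = m - r" if "j < n" for j
    using G len that R(1-3) by (simp add: card_Diff_subset)
  have "finite S" using G \<open>S = \<Union>(set Gs)\<close> by auto
  moreover have init: "init_seg (P j) S" if "j \<le> n" for j
    unfolding P_def S using init_seg_prefix_blocks[OF R(5,6) that] .
  moreover have "card (P j) = r + j * (m - r)" if "j \<le> n" for j
    using that
  proof (induction j)
    case (Suc j)
    have "finite (P j)"
      using init[of j] Suc.prems \<open>finite S\<close> unfolding init_seg_def by (auto intro: finite_subset)
    then show ?case
      using Suc card_G[of j] disjoint[of j] G len by (simp add: P_Suc card_Un_disjoint)
  qed (simp add: P_def R(2))
  moreover have "Gs ! j = P 0 \<union> (P (Suc j) - P j)" if "j < n" for j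
    using P_Suc[of j] disjoint[OF that] R(3)[OF that] by (auto simp: P_def)
  moreover have "P 1 = Gs ! 0" using R(3)[of 0] assms(2) by (auto simp: P_def)
  ultimately show ?thesis by (rule that)
qed

lemma delta_decomp_init_seg_first:
  assumes "delta_decomp n r m S Gs" "2 \<le> n" "r < m"
  shows "init_seg (Gs ! 0) S"
proof -
  obtain P where "finite S" and P: "\<And>j. j \<le> n \<Longrightarrow> init_seg (P j) S"
    "\<And>j. j \<le> n \<Longrightarrow> card (P j) = r + j * (m - r)"
    "\<And>j. j < n \<Longrightarrow> Gs ! j = P 0 \<union> (P (Suc j) - P j)" "P 1 = Gs ! 0"
    using delta_decomp_prefixes[OF assms] by blast
  then show ?thesis using P(1)[of 1] assms(2) by simp
qed

lemma delta_decomp_unique: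
  assumes "delta_decomp n r m S Gs" "delta_decomp n r m S Gs'" "2 \<le> n" "r < m"
  shows "Gs = Gs'"
proof -
  obtain P where "finite S" and P: "\<And>j. j \<le> n \<Longrightarrow> init_seg (P j) S"
    "\<And>j. j \<le> n \<Longrightarrow> card (P j) = r + j * (m - r)"
    "\<And>j. j < n \<Longrightarrow> Gs ! j = P 0 \<union> (P (Suc j) - P j)" "P 1 = Gs ! 0"
    using delta_decomp_prefixes[OF assms(1,3,4)] by blast
  obtain P' where "finite S" and P': "\<And>j. j \<le> n \<Longrightarrow> init_seg (P' j) S"
    "\<And>j. j \<le> n \<Longrightarrow> card (P' j) = r + j * (m - r)"
    "\<And>j. j < n \<Longrightarrow> Gs' ! j = P' 0 \<union> (P' (Suc j) - P' j)" "P' 1 = Gs' ! 0"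
    using delta_decomp_prefixes[OF assms(2,3,4)] by blast
  have "P j = P' j" if "j \<le> n" for j
    using init_seg_card_eq[OF P(1) P'(1) \<open>finite S\<close>] P(2) P'(2) that by simp
  then have "Gs ! j = Gs' ! j" if "j < n" for j
    using P(3) P'(3) that by simp
  moreover have "length Gs = n" "length Gs' = n" using assms(1,2) unfolding delta_decomp_def by blast+
  ultimately show ?thesis by (simp add: nth_equalityI)
qed

lemma delta_decomp_image:
  assumes "delta_decomp n r m S Gs" "0 < n" "strict_mono g"
  shows "delta_decomp n r m (g ` S) (map ((`) g) Gs)"
proof -
  have inj: "inj g" using assms(3) strict_mono_imp_inj_on by blast
  have len: "length Gs = n" and G: "\<forall>G\<in>set Gs. finite G \<and> card G = m" and S: "S = \<Union>(set Gs)"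
    using assms(1) unfolding delta_decomp_def by blast+
  obtain R where R: "\<forall>i<n. \<forall>j<n. i \<noteq> j \<longrightarrow> Gs ! i \<inter> Gs ! j = R" "card R = r"
    "set_less R (Gs ! 0 - R)" "\<forall>i. Suc i < n \<longrightarrow> set_less (Gs ! i - R) (Gs ! Suc i - R)"
    using assms(1) unfolding delta_decomp_def by blast
  have "\<forall>i<n. \<forall>j<n. i \<noteq> j \<longrightarrow> g ` (Gs ! i) \<inter> g ` (Gs ! j) = g ` R"
    using R(1) by (simp add: image_Int[OF inj, symmetric])
  moreover have "card (g ` R) = r" using R(2) inj by (simp add: card_image inj_on_subset)
  moreover have "set_less (g ` R) (g ` (Gs ! 0) - g ` R)"
    using set_less_image[OF assms(3) R(3)] by (simp add: image_set_diff[OF inj])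
  moreover have "\<forall>i. Suc i < n \<longrightarrow> set_less (g ` (Gs ! i) - g ` R) (g ` (Gs ! Suc i) - g ` R)"
    unfolding image_set_diff[OF inj, symmetric] using R(4) by (blast intro: set_less_image[OF assms(3)])
  moreover have "\<forall>G\<in>set Gs. finite (g ` G) \<and> card (g ` G) = m"
    using G inj by (simp add: card_image inj_on_subset)
  ultimately show ?thesis
    unfolding delta_decomp_def using len S assms(2) by (auto simp: image_Union)
qed

lemma delta_decomp_blocks:
  assumes "is_type \<tau>"
  shows "delta_decomp (ty_n \<tau> k) (ty_r \<tau> k) (ty_m \<tau> k) {..<ty_m \<tau> (Suc k)}
    (map (\<lambda>a. block_emb \<tau> k a ` {..<ty_m \<tau> k}) [0..<ty_n \<tau> k])"
proof -
  let ?r = "ty_r \<tau> k" and ?d = "ty_m \<tau> k - ty_r \<tau> k"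
  let ?Gs = "map (\<lambda>a. block_emb \<tau> k a ` {..<ty_m \<tau> k}) [0..<ty_n \<tau> k]"
  have block: "block_emb \<tau> k a ` {..<ty_m \<tau> k} - {..<?r} = {?r + a * ?d ..< ?r + a * ?d + ?d}" for a
    unfolding block_emb_image[OF assms] by auto
  have "\<forall>G\<in>set ?Gs. finite G \<and> card G = ty_m \<tau> k"
    using strict_mono_block_emb by (auto simp: card_image strict_mono_imp_inj_on)
  moreover have "{..<ty_m \<tau> (Suc k)} = \<Union>(set ?Gs)"
    using UN_block_emb_image[OF assms, of k] by (simp add: atLeast0LessThan)
  moreover have "\<forall>i<ty_n \<tau> k. \<forall>j<ty_n \<tau> k. i \<noteq> j \<longrightarrow> ?Gs ! i \<inter> ?Gs ! j = {..<?r}"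
    using block_emb_image_Int[OF assms] by simp
  moreover have "set_less {..<?r} (block_emb \<tau> k a ` {..<ty_m \<tau> k} - {..<?r})" for a
    unfolding block set_less_def by auto
  moreover have "set_less (block_emb \<tau> k a ` {..<ty_m \<tau> k} - {..<?r})
      (block_emb \<tau> k (Suc a) ` {..<ty_m \<tau> k} - {..<?r})" for a
    unfolding block set_less_def by (auto simp: algebra_simps)
  moreover have "0 < ty_n \<tau> k" by (rule ty_n_pos[OF assms])
  ultimately show ?thesis unfolding delta_decomp_def
    by (intro conjI exI[of _ "{..<?r}"]) simp_all
qed

definition canonical_blocks :: "(nat \<Rightarrow> nat \<times> nat \<times> nat) \<Rightarrow> nat \<Rightarrow> nat \<Rightarrow> (nat \<Rightarrow> nat) \<Rightarrow> nat set list" where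
  "canonical_blocks \<tau> k K f = map (\<lambda>a. emb \<tau> k K (f(k := a)) ` {..<ty_m \<tau> k}) [0..<ty_n \<tau> k]"

lemma set_canonical_blocks:
  "set (canonical_blocks \<tau> k K f) = (\<lambda>a. emb \<tau> k K (f(k := a)) ` {..<ty_m \<tau> k}) ` {..<ty_n \<tau> k}"
  unfolding canonical_blocks_def by auto

lemma nth_canonical_blocks:
  "a < ty_n \<tau> k \<Longrightarrow> canonical_blocks \<tau> k K f ! a = emb \<tau> k K (f(k := a)) ` {..<ty_m \<tau> k}"
  unfolding canonical_blocks_def by simp

lemma length_canonical_blocks: "length (canonical_blocks \<tau> k K f) = ty_n \<tau> k"
  unfolding canonical_blocks_def by simp

lemma delta_decomp_canonical_blocks:
  assumes "is_type \<tau>" "k < K"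
  shows "delta_decomp (ty_n \<tau> k) (ty_r \<tau> k) (ty_m \<tau> k)
    (emb \<tau> (Suc k) K f ` {..<ty_m \<tau> (Suc k)}) (canonical_blocks \<tau> k K f)"
proof -
  have "canonical_blocks \<tau> k K f
      = map ((`) (emb \<tau> (Suc k) K f)) (map (\<lambda>a. block_emb \<tau> k a ` {..<ty_m \<tau> k}) [0..<ty_n \<tau> k])"
    unfolding canonical_blocks_def emb_update_bottom[OF assms(2)] by (simp add: image_comp)
  moreover have "0 < ty_n \<tau> k" by (rule ty_n_pos[OF assms(1)])
  ultimately show ?thesis
    using delta_decomp_image[OF delta_decomp_blocks[OF assms(1)] _ strict_mono_emb] by simp
qed

section \<open>The canonical scheme\<close>

definition canonical :: "(nat \<Rightarrow> nat \<times> nat \<times> nat) \<Rightarrow> nat set set" where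
  "canonical \<tau> = {emb \<tau> k K f ` {..<ty_m \<tau> k} | k K f. k \<le> K \<and> admissible \<tau> f k K}"

lemma canonicalI: "k \<le> K \<Longrightarrow> admissible \<tau> f k K \<Longrightarrow> emb \<tau> k K f ` {..<ty_m \<tau> k} \<in> canonical \<tau>"
  unfolding canonical_def by blast

lemma canonicalE:
  assumes "A \<in> canonical \<tau>"
  obtains k K f where "k \<le> K" "admissible \<tau> f k K" "A = emb \<tau> k K f ` {..<ty_m \<tau> k}"
  using assms unfolding canonical_def by blast

lemma lessThan_ty_m_canonical: "{..<ty_m \<tau> N} \<in> canonical \<tau>"
  using canonicalI[of N N \<tau> "\<lambda>_. 0"] by (simp add: admissible_def emb_trivial)

lemma finite_card_canonical: "A \<in> canonical \<tau> \<Longrightarrow> finite A \<and> card A \<in> range (ty_m \<tau>)"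
  by (auto elim!: canonicalE simp: card_emb_image)

lemma emb_pad_above:
  assumes "is_type \<tau>" "admissible \<tau> f k K" "k \<le> K" "K \<le> K'"
  obtains g where "admissible \<tau> g k K'" "emb \<tau> k K' g = emb \<tau> k K f"
proof
  define g where "g j = (if j < K then f j else 0)" for j
  have "emb \<tau> k K' g = emb \<tau> K K' g \<circ> emb \<tau> k K g" using assms(3,4) by (rule emb_trans)
  also have "emb \<tau> K K' g = id" by (rule emb_eq_id) (simp add: g_def)
  also have "emb \<tau> k K g = emb \<tau> k K f" by (rule emb_cong) (simp add: g_def)
  finally show "emb \<tau> k K' g = emb \<tau> k K f" by simp
  show "admissible \<tau> g k K'"
    using assms(2) ty_n_pos[OF assms(1)] unfolding admissible_def g_def by simp
qed

lemma emb_image_lower_canonical: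
  assumes "is_type \<tau>" "admissible \<tau> f k K" "k \<le> K" "i \<le> k"
  shows "emb \<tau> k K f ` {..<ty_m \<tau> i} \<in> canonical \<tau>"
proof -
  define g where "g j = (if j < k then 0 else f j)" for j
  have "emb \<tau> i K g = emb \<tau> k K g \<circ> emb \<tau> i k g" using assms(4,3) by (rule emb_trans)
  also have "emb \<tau> i k g = id" by (rule emb_eq_id) (simp add: g_def)
  also have "emb \<tau> k K g = emb \<tau> k K f" by (rule emb_cong) (simp add: g_def)
  finally have "emb \<tau> i K g = emb \<tau> k K f" by simp
  moreover have "admissible \<tau> g i K"
    using assms(2) ty_n_pos[OF assms(1)] unfolding admissible_def g_def by simp
  ultimately show ?thesis using canonicalI[of i K \<tau> g] assms(3,4) by simp
qed

lemma card_chain_lower_bound: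
  assumes "strict_mono h" "\<And>B. B \<in> F \<Longrightarrow> finite B \<and> card B \<in> range h"
    and "\<forall>i\<le>y. d i \<in> F" "\<forall>i<y. d i \<subset> d (Suc i)" "i \<le> y"
  shows "h i \<le> card (d i)"
  using assms(5)
proof (induction i)
  case 0
  then obtain j where "card (d 0) = h j" using assms(2,3) by blast
  then show ?case using strict_mono_less_eq[OF assms(1), of 0 j] by simp
next
  case (Suc i)
  obtain j where j: "card (d (Suc i)) = h j" and fin: "finite (d (Suc i))"
    using assms(2,3) Suc.prems by blast
  have "d i \<subset> d (Suc i)" using assms(4) Suc.prems by simp
  then have "card (d i) < card (d (Suc i))" by (rule psubset_card_mono[OF fin])
  with Suc j have "h i < h j" by simp
  then have "Suc i \<le> j" using strict_mono_less[OF assms(1)] by simp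
  then show ?case using j strict_mono_less_eq[OF assms(1)] by simp
qed

lemma fam_rank_eqI:
  assumes "strict_mono h" "\<And>B. B \<in> F \<Longrightarrow> finite B \<and> card B \<in> range h" "card A = h k"
    and "c k = A" "\<forall>i\<le>k. c i \<in> F" "\<forall>i<k. c i \<subset> c (Suc i)"
  shows "fam_rank F A = k"
  unfolding fam_rank_def
proof (rule Greatest_equality)
  show "\<exists>c. c k = A \<and> (\<forall>i\<le>k. c i \<in> F) \<and> (\<forall>i<k. c i \<subset> c (Suc i))"
    using assms(4-6) by blast
next
  fix y assume "\<exists>d. d y = A \<and> (\<forall>i\<le>y. d i \<in> F) \<and> (\<forall>i<y. d i \<subset> d (Suc i))"
  then obtain d where "d y = A" "\<forall>i\<le>y. d i \<in> F" "\<forall>i<y. d i \<subset> d (Suc i)" by blast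
  then have "h y \<le> h k" using card_chain_lower_bound[OF assms(1,2), where y = y and d = d and i = y] assms(3) by simp
  then show "y \<le> k" using strict_mono_less_eq[OF assms(1)] by simp
qed

lemma fam_rank_canonical:
  assumes "is_type \<tau>" "admissible \<tau> f k K" "k \<le> K"
  shows "fam_rank (canonical \<tau>) (emb \<tau> k K f ` {..<ty_m \<tau> k}) = k"
proof -
  let ?c = "\<lambda>i. emb \<tau> k K f ` {..<ty_m \<tau> i}"
  have lower: "\<forall>i\<le>k. ?c i \<in> canonical \<tau>"
    by (intro allI impI emb_image_lower_canonical[OF assms])
  have strict: "\<forall>i<k. ?c i \<subset> ?c (Suc i)"
    by (intro allI impI image_strict_mono[OF inj_on_subset[OF inj_emb subset_UNIV]])
      (simp add: lessThan_strict_subset_iff ty_m_less_iff[OF assms(1)])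
  show ?thesis
    by (rule fam_rank_eqI[where c = ?c, OF strict_mono_ty_m[OF assms(1)] finite_card_canonical
          card_emb_image refl lower strict])
qed

lemma level_canonical:
  assumes "is_type \<tau>"
  shows "level (canonical \<tau>) k = {A \<in> canonical \<tau>. card A = ty_m \<tau> k}"
proof -
  have "fam_rank (canonical \<tau>) A = k \<longleftrightarrow> card A = ty_m \<tau> k" if "A \<in> canonical \<tau>" for A
    using that
  proof (rule canonicalE)
    fix k' K f assume "k' \<le> K" "admissible \<tau> f k' K" "A = emb \<tau> k' K f ` {..<ty_m \<tau> k'}"
    then show ?thesis
      using fam_rank_canonical[OF assms] card_emb_image ty_m_eq_iff[OF assms] by metis
  qed
  then show ?thesis unfolding level_def by blast
qed

lemma level_canonicalE:
  assumes "is_type \<tau>" "A \<in> level (canonical \<tau>) k"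
  obtains K f where "k \<le> K" "admissible \<tau> f k K" "A = emb \<tau> k K f ` {..<ty_m \<tau> k}"
proof -
  obtain k' K f where "k' \<le> K" "admissible \<tau> f k' K" and A: "A = emb \<tau> k' K f ` {..<ty_m \<tau> k'}"
    using assms(2) unfolding level_canonical[OF assms(1)] by (blast elim: canonicalE)
  moreover have "k' = k"
    using assms(2) A card_emb_image ty_m_eq_iff[OF assms(1)] unfolding level_canonical[OF assms(1)] by auto
  ultimately show ?thesis using that by blast
qed

lemma init_seg_Int_block_emb_images:
  assumes "is_type \<tau>" "init_seg (Y \<inter> Y') Y" "Y \<subseteq> {..<ty_m \<tau> k}" "Y' \<subseteq> {..<ty_m \<tau> k}"
  shows "init_seg (block_emb \<tau> k a ` Y \<inter> block_emb \<tau> k b ` Y') (block_emb \<tau> k a ` Y)"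
  unfolding init_seg_def
proof (intro conjI ballI impI)
  show "block_emb \<tau> k a ` Y \<inter> block_emb \<tau> k b ` Y' \<subseteq> block_emb \<tau> k a ` Y" by (rule Int_lower1)
next
  fix v u assume v: "v \<in> block_emb \<tau> k a ` Y" and u: "u \<in> block_emb \<tau> k a ` Y \<inter> block_emb \<tau> k b ` Y'"
    and "v < u"
  obtain z where z: "z \<in> Y" "v = block_emb \<tau> k a z" using v by blast
  obtain y where y: "y \<in> Y" "u = block_emb \<tau> k a y" using u by blast
  obtain y' where y': "y' \<in> Y'" "u = block_emb \<tau> k b y'" using u by blast
  have "z < y" using \<open>v < u\<close> z(2) y(2) strict_mono_less[OF strict_mono_block_emb] by simp
  show "v \<in> block_emb \<tau> k a ` Y \<inter> block_emb \<tau> k b ` Y'"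
  proof (cases "a = b")
    case True
    then have "y' = y" using y(2) y'(2) strict_mono_eq[OF strict_mono_block_emb] by simp
    then have "z \<in> Y'" using assms(2) z(1) y y'(1) \<open>z < y\<close> unfolding init_seg_def by blast
    then show ?thesis using z v True by blast
  next
    case False
    txt \<open>Distinct blocks meet only in the root, on which block_emb is the identity.\<close>
    have "u \<in> block_emb \<tau> k a ` {..<ty_m \<tau> k} \<inter> block_emb \<tau> k b ` {..<ty_m \<tau> k}"
      using u assms(3,4) by blast
    then have "u < ty_r \<tau> k" unfolding block_emb_image_Int[OF assms(1) False] by simp
    then have "y < ty_r \<tau> k" "y' < ty_r \<tau> k" using le_block_emb y(2) y'(2) by (metis le_less_trans)+
    then have "y' = y" using y(2) y'(2) by (simp add: block_emb_root)
    with \<open>z < y\<close> have "z \<in> Y'" using assms(2) z(1) y y'(1) unfolding init_seg_def by blast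
    moreover have "block_emb \<tau> k b z = v" using z(2) \<open>z < y\<close> \<open>y < ty_r \<tau> k\<close> by (simp add: block_emb_root)
    ultimately show ?thesis using v by blast
  qed
qed

lemma init_seg_Int_emb_images:
  assumes "is_type \<tau>" "admissible \<tau> f k K" "admissible \<tau> g k K" "k \<le> K"
  shows "init_seg (emb \<tau> k K f ` {..<ty_m \<tau> k} \<inter> emb \<tau> k K g ` {..<ty_m \<tau> k})
    (emb \<tau> k K f ` {..<ty_m \<tau> k})"
  using assms(2-4)
proof (induction K)
  case 0
  then show ?case by (simp add: init_seg_def)
next
  case (Suc K)
  show ?case
  proof (cases "k = Suc K")
    case True
    then show ?thesis by (simp add: emb_trivial init_seg_def)
  next
    case False
    with Suc.prems have kK: "k \<le> K" by simp
    have adm: "admissible \<tau> f k K" "admissible \<tau> g k K"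
      using Suc.prems(1,2) by (auto intro: admissible_lower)
    show ?thesis
      using init_seg_Int_block_emb_images[OF assms(1) Suc.IH[OF adm kK]
          emb_image_subset[OF assms(1) adm(1) kK] emb_image_subset[OF assms(1) adm(2) kK]] kK
      by (simp add: image_comp)
  qed
qed

lemma canonical_init_seg_Int:
  assumes "is_type \<tau>" "E \<in> level (canonical \<tau>) k" "F \<in> level (canonical \<tau>) k"
  shows "init_seg (E \<inter> F) E"
proof -
  obtain K1 f1 where K1: "k \<le> K1" "admissible \<tau> f1 k K1" and E: "E = emb \<tau> k K1 f1 ` {..<ty_m \<tau> k}"
    using level_canonicalE[OF assms(1,2)] by blast
  obtain K2 f2 where K2: "k \<le> K2" "admissible \<tau> f2 k K2" and F: "F = emb \<tau> k K2 f2 ` {..<ty_m \<tau> k}"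
    using level_canonicalE[OF assms(1,3)] by blast
  obtain g1 where g1: "admissible \<tau> g1 k (max K1 K2)" "emb \<tau> k (max K1 K2) g1 = emb \<tau> k K1 f1"
    using emb_pad_above[OF assms(1) K1(2,1), of "max K1 K2"] by auto
  obtain g2 where g2: "admissible \<tau> g2 k (max K1 K2)" "emb \<tau> k (max K1 K2) g2 = emb \<tau> k K2 f2"
    using emb_pad_above[OF assms(1) K2(2,1), of "max K1 K2"] by auto
  show ?thesis
    using init_seg_Int_emb_images[OF assms(1) g1(1) g2(1)] K1(1) unfolding E F g1(2) g2(2) by simp
qed

lemma canonical_blocks_level:
  assumes "is_type \<tau>" "admissible \<tau> f (Suc k) K" "k < K"
  shows "set (canonical_blocks \<tau> k K f) \<subseteq> level (canonical \<tau>) k"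
  unfolding set_canonical_blocks level_canonical[OF assms(1)]
  using canonicalI[of k K \<tau>] admissible_update[OF assms(2)] assms(3) card_emb_image by auto

lemma canonical_decomposes_unique:
  assumes "is_type \<tau>" "S \<in> level (canonical \<tau>) (Suc k)"
  shows "\<exists>!Gs. decomposes (canonical \<tau>) k (ty_n \<tau> k) (ty_r \<tau> k) S Gs"
proof -
  obtain K f where "Suc k \<le> K" "admissible \<tau> f (Suc k) K"
    and S: "S = emb \<tau> (Suc k) K f ` {..<ty_m \<tau> (Suc k)}"
    using level_canonicalE[OF assms] by blast
  then have "k < K" by simp
  have canon: "delta_decomp (ty_n \<tau> k) (ty_r \<tau> k) (ty_m \<tau> k) S (canonical_blocks \<tau> k K f)"
    unfolding S by (rule delta_decomp_canonical_blocks[OF assms(1) \<open>k < K\<close>])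
  have levels: "finite G \<and> card G = ty_m \<tau> k" if "G \<in> level (canonical \<tau>) k" for G
    using that finite_card_canonical unfolding level_canonical[OF assms(1)] by blast
  show ?thesis
  proof (rule ex1I)
    show "decomposes (canonical \<tau>) k (ty_n \<tau> k) (ty_r \<tau> k) S (canonical_blocks \<tau> k K f)"
      using canon canonical_blocks_level[OF assms(1) \<open>admissible \<tau> f (Suc k) K\<close> \<open>k < K\<close>]
      by (rule delta_decomp_imp_decomposes)
  next
    fix Gs assume "decomposes (canonical \<tau>) k (ty_n \<tau> k) (ty_r \<tau> k) S Gs"
    then show "Gs = canonical_blocks \<tau> k K f"
      using delta_decomp_unique[OF decomposes_imp_delta_decomp[OF _ levels] canon]
        is_typeD(2,3)[OF assms(1)] by blast
  qed
qed

theorem construction_scheme_canonical: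
  assumes "is_type \<tau>"
  shows "construction_scheme \<tau> (canonical \<tau>)"
  unfolding construction_scheme_def
proof (intro conjI allI ballI impI)
  fix A assume "A \<in> canonical \<tau>"
  then show "finite A" using finite_card_canonical by simp
next
  fix A :: "nat set" assume "finite A"
  then obtain N where "A \<subseteq> {..<ty_m \<tau> N}" by (rule finite_subset_lessThan_ty_m[OF assms])
  then show "\<exists>F\<in>canonical \<tau>. A \<subseteq> F" using lessThan_ty_m_canonical by (rule bexI)
next
  fix k F assume "F \<in> level (canonical \<tau>) k"
  then show "card F = ty_m \<tau> k" unfolding level_canonical[OF assms] by simp
next
  fix k E F assume "E \<in> level (canonical \<tau>) k" "F \<in> level (canonical \<tau>) k"
  then show "init_seg (E \<inter> F) E" by (rule canonical_init_seg_Int[OF assms])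
next
  fix k E F assume "E \<in> level (canonical \<tau>) k" "F \<in> level (canonical \<tau>) k"
  then have "init_seg (F \<inter> E) F" by (rule canonical_init_seg_Int[OF assms, rotated])
  then show "init_seg (E \<inter> F) F" by (simp add: Int_commute)
next
  fix k S assume "S \<in> level (canonical \<tau>) (Suc k)"
  then show "\<exists>!Gs. decomposes (canonical \<tau>) k (ty_n \<tau> k) (ty_r \<tau> k) S Gs"
    by (rule canonical_decomposes_unique[OF assms])
qed

section \<open>Uniqueness\<close>

lemma construction_schemeD:
  assumes "construction_scheme \<tau> F"
  shows "A \<in> F \<Longrightarrow> finite A" "finite A \<Longrightarrow> \<exists>S\<in>F. A \<subseteq> S"
    "A \<in> level F k \<Longrightarrow> card A = ty_m \<tau> k"
    "E \<in> level F k \<Longrightarrow> S \<in> level F k \<Longrightarrow> init_seg (E \<inter> S) E"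
    "S \<in> level F (Suc k) \<Longrightarrow> \<exists>!Gs. decomposes F k (ty_n \<tau> k) (ty_r \<tau> k) S Gs"
  using assms unfolding construction_scheme_def by simp_all

lemma scheme_level_card:
  assumes "construction_scheme \<tau> F" "A \<in> level F k"
  shows "finite A" "card A = ty_m \<tau> k"
  using construction_schemeD(1,3)[OF assms(1)] assms(2) unfolding level_def by auto

lemma scheme_level_eq_if_subset:
  assumes "construction_scheme \<tau> F" "E \<in> level F k" "S \<in> level F k" "E \<subseteq> S"
  shows "E = S"
  using card_subset_eq[OF scheme_level_card(1)[OF assms(1,3)] assms(4)]
    scheme_level_card(2)[OF assms(1,2)] scheme_level_card(2)[OF assms(1,3)] by simp

lemma scheme_decomposition:
  assumes "construction_scheme \<tau> F" "S \<in> level F (Suc k)"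
  obtains Gs where "decomposes F k (ty_n \<tau> k) (ty_r \<tau> k) S Gs"
    "delta_decomp (ty_n \<tau> k) (ty_r \<tau> k) (ty_m \<tau> k) S Gs"
proof -
  have "\<exists>!Gs. decomposes F k (ty_n \<tau> k) (ty_r \<tau> k) S Gs"
    by (rule construction_schemeD(5)[OF assms])
  then obtain Gs where Gs: "decomposes F k (ty_n \<tau> k) (ty_r \<tau> k) S Gs" by (auto dest: ex1_implies_ex)
  moreover have "delta_decomp (ty_n \<tau> k) (ty_r \<tau> k) (ty_m \<tau> k) S Gs"
    by (rule decomposes_imp_delta_decomp[OF Gs]) (simp add: scheme_level_card[OF assms(1)])
  ultimately show ?thesis by (rule that)
qed

lemma scheme_init_seg_Int:
  assumes "construction_scheme \<tau> F" "E \<in> level F k" "S \<in> level F l" "k \<le> l"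
  shows "init_seg (E \<inter> S) E"
  using assms(3,4)
proof (induction l arbitrary: S)
  case (Suc l)
  show ?case
  proof (cases "k = Suc l")
    case False
    with Suc.prems have "k \<le> l" by simp
    obtain Gs where "decomposes F l (ty_n \<tau> l) (ty_r \<tau> l) S Gs"
      using scheme_decomposition[OF assms(1) Suc.prems(1)] by blast
    then have "S = \<Union>(set Gs)" "set Gs \<subseteq> level F l" unfolding decomposes_def by auto
    then show ?thesis using Suc.IH[OF _ \<open>k \<le> l\<close>] by (simp add: init_seg_Int_Union subset_iff)
  qed (use construction_schemeD(4)[OF assms(1,2)] Suc.prems in simp)
qed (use construction_schemeD(4)[OF assms(1,2)] in simp)

lemma scheme_init_seg_lower_level:
  assumes "is_type \<tau>" "construction_scheme \<tau> F" "S \<in> level F l" "k \<le> l"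
  shows "\<exists>G\<in>level F k. init_seg G S"
  using assms(3,4)
proof (induction l arbitrary: S)
  case (Suc l)
  show ?case
  proof (cases "k = Suc l")
    case False
    with Suc.prems have "k \<le> l" by simp
    obtain Gs where Gs: "decomposes F l (ty_n \<tau> l) (ty_r \<tau> l) S Gs"
      "delta_decomp (ty_n \<tau> l) (ty_r \<tau> l) (ty_m \<tau> l) S Gs"
      using scheme_decomposition[OF assms(2) Suc.prems(1)] by blast
    have "Gs ! 0 \<in> level F l"
      using Gs(1) ty_n_pos[OF assms(1), of l] unfolding decomposes_def by auto
    moreover have "init_seg (Gs ! 0) S"
      using delta_decomp_init_seg_first[OF Gs(2)] is_typeD(2,3)[OF assms(1)] by blast
    ultimately show ?thesis using Suc.IH[OF _ \<open>k \<le> l\<close>] init_seg_trans by blast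
  qed (use Suc.prems init_seg_refl in auto)
qed (use init_seg_refl in auto)

lemma scheme_lessThan_level:
  assumes "is_type \<tau>" "construction_scheme \<tau> F"
  shows "{..<ty_m \<tau> k} \<in> level F k"
proof -
  obtain S where "S \<in> F" "{..<ty_m \<tau> k} \<subseteq> S"
    using construction_schemeD(2)[OF assms(2), of "{..<ty_m \<tau> k}"] by auto
  then have S: "S \<in> level F (fam_rank F S)" unfolding level_def by simp
  then have "finite S" "card S = ty_m \<tau> (fam_rank F S)" by (rule scheme_level_card[OF assms(2)])+
  then have "ty_m \<tau> k \<le> ty_m \<tau> (fam_rank F S)"
    using card_mono[OF \<open>finite S\<close> \<open>{..<ty_m \<tau> k} \<subseteq> S\<close>] by simp
  then have "k \<le> fam_rank F S" using ty_m_le_iff[OF assms(1)] by simp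
  then obtain G where G: "G \<in> level F k" "init_seg G S"
    using scheme_init_seg_lower_level[OF assms S] by blast
  have "G = {..<ty_m \<tau> k}"
    using init_seg_card_eq[OF G(2) init_seg_lessThan[OF \<open>{..<ty_m \<tau> k} \<subseteq> S\<close>] \<open>finite S\<close>]
      scheme_level_card(2)[OF assms(2) G(1)] by simp
  with G(1) show ?thesis by simp
qed

lemma scheme_emb_image_level:
  assumes "is_type \<tau>" "construction_scheme \<tau> F" "k \<le> K" "admissible \<tau> f k K"
  shows "emb \<tau> k K f ` {..<ty_m \<tau> k} \<in> level F k"
  using assms(3,4)
proof (induction k arbitrary: f rule: inc_induct)
  case base
  then show ?case using scheme_lessThan_level[OF assms(1,2)] by (simp add: emb_trivial)
next
  case (step k)
  let ?S = "emb \<tau> (Suc k) K f ` {..<ty_m \<tau> (Suc k)}"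
  have "?S \<in> level F (Suc k)" using step.IH admissible_Suc[OF step.prems] .
  then obtain Gs where Gs: "decomposes F k (ty_n \<tau> k) (ty_r \<tau> k) ?S Gs"
    "delta_decomp (ty_n \<tau> k) (ty_r \<tau> k) (ty_m \<tau> k) ?S Gs"
    by (rule scheme_decomposition[OF assms(2)])
  have "Gs = canonical_blocks \<tau> k K f"
    using delta_decomp_unique[OF Gs(2) delta_decomp_canonical_blocks[OF assms(1) step.hyps(2)]]
      is_typeD(2,3)[OF assms(1)] by blast
  moreover have "f k < ty_n \<tau> k" using step.prems step.hyps unfolding admissible_def by simp
  ultimately have "emb \<tau> k K f ` {..<ty_m \<tau> k} \<in> set Gs"
    using nth_canonical_blocks[of "f k" \<tau> k K f] length_canonical_blocks[of \<tau> k K f]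
    by (metis fun_upd_triv nth_mem)
  then show ?case using Gs(1) unfolding decomposes_def by blast
qed

lemma canonical_subset_scheme:
  assumes "is_type \<tau>" "construction_scheme \<tau> F"
  shows "canonical \<tau> \<subseteq> F"
proof
  fix A assume "A \<in> canonical \<tau>"
  then obtain k K f where "k \<le> K" "admissible \<tau> f k K" "A = emb \<tau> k K f ` {..<ty_m \<tau> k}"
    by (rule canonicalE)
  then show "A \<in> F" using scheme_emb_image_level[OF assms] unfolding level_def by blast
qed

lemma canonical_if_level_subset_emb_image:
  assumes "is_type \<tau>" "construction_scheme \<tau> F" "E \<in> level F k"
    and "admissible \<tau> f k N" "k \<le> N" "E \<subseteq> emb \<tau> k N f ` {..<ty_m \<tau> k}"
  shows "E \<in> canonical \<tau>"
  using scheme_level_eq_if_subset[OF assms(2,3) scheme_emb_image_level[OF assms(1,2,5,4)] assms(6)]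
    canonicalI[OF assms(5,4)] by simp

lemma canonical_if_subset_emb_image:
  assumes "is_type \<tau>" "construction_scheme \<tau> F" "E \<in> level F k"
    and "admissible \<tau> f j N" "k \<le> j" "j \<le> N" "E \<subseteq> emb \<tau> j N f ` {..<ty_m \<tau> j}"
  shows "E \<in> canonical \<tau>"
  using assms(4-)
proof (induction j arbitrary: f)
  case 0
  then show ?case using canonical_if_level_subset_emb_image[OF assms(1-3), of f N] by simp
next
  case (Suc j)
  show ?case
  proof (cases "k = Suc j")
    case True
    then show ?thesis using Suc.prems canonical_if_level_subset_emb_image[OF assms(1-3), of f N] by simp
  next
    case False
    with Suc.prems have "k \<le> j" "j < N" by auto
    txt \<open>E is coherent with the block containing Max E, hence lies inside it.\<close>
    have "finite E" "E \<noteq> {}"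
      using scheme_level_card[OF assms(2,3)] ty_m_pos[OF assms(1), of k] by auto
    then have "Max E \<in> emb \<tau> (Suc j) N f ` {..<ty_m \<tau> (Suc j)}"
      using Max_in Suc.prems(4) by blast
    also have "\<dots> = \<Union>(set (canonical_blocks \<tau> j N f))"
      using delta_decomp_canonical_blocks[OF assms(1) \<open>j < N\<close>, of f] unfolding delta_decomp_def by blast
    finally obtain a where "a < ty_n \<tau> j" and Max: "Max E \<in> emb \<tau> j N (f(j := a)) ` {..<ty_m \<tau> j}"
      unfolding set_canonical_blocks by auto
    then have adm: "admissible \<tau> (f(j := a)) j N" using admissible_update Suc.prems(1) by blast
    then have "emb \<tau> j N (f(j := a)) ` {..<ty_m \<tau> j} \<in> level F j"
      using scheme_emb_image_level[OF assms(1,2)] \<open>j < N\<close> by simp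
    then have "init_seg (E \<inter> emb \<tau> j N (f(j := a)) ` {..<ty_m \<tau> j}) E"
      using scheme_init_seg_Int[OF assms(2,3)] \<open>k \<le> j\<close> by blast
    then have "E \<subseteq> emb \<tau> j N (f(j := a)) ` {..<ty_m \<tau> j}"
      using init_seg_Int_subset \<open>finite E\<close> \<open>E \<noteq> {}\<close> Max by blast
    moreover have "j \<le> N" using \<open>j < N\<close> by simp
    ultimately show ?thesis using Suc.IH[OF adm \<open>k \<le> j\<close>] by blast
  qed
qed

lemma scheme_subset_canonical:
  assumes "is_type \<tau>" "construction_scheme \<tau> F"
  shows "F \<subseteq> canonical \<tau>"
proof
  fix E assume "E \<in> F"
  then have E: "E \<in> level F (fam_rank F E)" unfolding level_def by simp
  then have "finite E" by (rule scheme_level_card[OF assms(2)])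
  then obtain N where sub: "E \<subseteq> {..<ty_m \<tau> N}" by (rule finite_subset_lessThan_ty_m[OF assms(1)])
  then have "ty_m \<tau> (fam_rank F E) \<le> ty_m \<tau> N"
    using card_mono[OF _ sub] scheme_level_card(2)[OF assms(2) E] by simp
  then have "fam_rank F E \<le> N" using ty_m_le_iff[OF assms(1)] by simp
  moreover have "admissible \<tau> (\<lambda>_. 0) N N" by (simp add: admissible_def)
  ultimately show "E \<in> canonical \<tau>"
    using canonical_if_subset_emb_image[OF assms E] sub by (simp add: emb_trivial)
qed

theorem mainTheorem19:
  assumes "is_type \<tau>"
  shows "\<exists>!\<F>. construction_scheme \<tau> \<F>"
proof (rule ex1I)
  show "construction_scheme \<tau> (canonical \<tau>)" by (rule construction_scheme_canonical[OF assms])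
next
  fix F assume "construction_scheme \<tau> F"
  then show "F = canonical \<tau>"
    using canonical_subset_scheme[OF assms] scheme_subset_canonical[OF assms] by blast
qed

end
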